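(* Let $m\ge 1$ be an integer, $\Gamma_1,\Gamma_2$ co-prime integers with $1<\Gamma_1<\Gamma_2$, $m_1=m\Gamma_1$, $m_2=m\Gamma_2$, and $\sigma_1=|\Gamma_2|_{\Gamma_1}\ge 2$. Let $N$ be an integer with $0\le N< m_1\left(1+\lfloor m_2/m_1\rfloor\lfloor m_1/|m_2|_{m_1}\rfloor\right)$, with remainders $r_i=|N|_{m_i}$, and let $\tilde r_1,\tilde r_2$ be erroneous remainders whose errors $\Delta r_i=\tilde r_i-r_i$ satisfy $$-\frac{\sigma_1}{2}\le \frac{\Delta r_1-\Delta r_2}{m}<\frac{\sigma_1}{2}.$$ Let $\mathbf q_{21}=(\tilde r_1-\tilde r_2)/m$. Then: (1) if $\mathbf q_{21}\ge \sigma_1/2$, then $r_1>r_2$; (2) if $\mathbf q_{21}<-\sigma_1/2$, then $r_1<r_2$; (3) if $-\sigma_1/2\le \mathbf q_{21}<\sigma_1/2$, then $r_1=r_2$.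
   Context: $|a|_b$ denotes the remainder of the integer $a$ modulo the positive integer $b$ (in $[0,b)$). Erroneous remainders are integers $\tilde r_i$ with $0\le \tilde r_i<m_i$. *)

theory Defs
  imports Main Complex_Main
begin

end

theory Submission
  imports Defs
begin

text \<open>Write \<open>N = m n + c\<close> with \<open>0 \<le> c < m\<close>; then \<open>r\<^sub>i = m |n|\<^sub>\<Gamma>\<^sub>i + c\<close>, so \<open>r\<^sub>1 - r\<^sub>2\<close> is \<open>m\<close>
  times \<open>d = |n|\<^sub>\<Gamma>\<^sub>1 - |n|\<^sub>\<Gamma>\<^sub>2\<close>. Writing \<open>n = j \<Gamma>\<^sub>2 + s\<close>, the range bound on \<open>N\<close> forces
  \<open>0 \<le> j \<le> \<lfloor>\<Gamma>\<^sub>1/\<sigma>\<^sub>1\<rfloor>\<close>, and since \<open>\<Gamma>\<^sub>2 \<equiv> \<sigma>\<^sub>1 (mod \<Gamma>\<^sub>1)\<close> we get \<open>d = j \<sigma>\<^sub>1 - l \<Gamma>\<^sub>1\<close> with \<open>l \<ge> 0\<close>;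
  this is either \<open>0\<close> or of absolute value at least \<open>\<sigma>\<^sub>1\<close>. The observed quotient
  \<open>q\<^sub>2\<^sub>1\<close> is \<open>d\<close> perturbed by less than \<open>\<sigma>\<^sub>1/2\<close>, so rounding it recovers the sign of \<open>d\<close>.\<close>

lemma div_less_of_less_mult_int:
  fixes N m c :: int
  assumes "0 < m" "N < m * c"
  shows "N div m < c"
proof -
  have "m * (N div m) \<le> N"
    using assms(1) minus_mod_eq_mult_div[of N m] pos_mod_sign[of m N] by linarith
  then show ?thesis
    using assms by (smt (verit) mult_less_cancel_left_pos)
qed

lemma mod_mult_diff_eq:
  fixes N m a b :: int
  assumes "0 \<le> a" "0 \<le> b"
  shows "N mod (m * a) - N mod (m * b) = m * (N div m mod a - N div m mod b)"
  using zmod_zmult2_eq[OF assms(1), of N m] zmod_zmult2_eq[OF assms(2), of N m]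
  by (simp add: algebra_simps)

lemma mod_eq_mod_of_div_mod:
  fixes a b n :: int
  shows "n mod a = (n div b * (b mod a) + n mod b) mod a"
  by (metis div_mult_mod_eq mod_add_left_eq mod_mult_right_eq)

lemma div_le_of_less_bound:
  fixes a b n :: int
  assumes "0 < a" "a < b" "0 < b mod a"
    and "n < a * (1 + (b div a) * (a div (b mod a)))"
  shows "n div b \<le> a div (b mod a)"
    and "n div b = a div (b mod a) \<Longrightarrow> n div b * (b mod a) + n mod b < a"
proof -
  define k \<sigma> t j s where "k = b div a" and "\<sigma> = b mod a" and "t = a div \<sigma>"
    and "j = n div b" and "s = n mod b"
  have b_eq: "b = k * a + \<sigma>"
    unfolding k_def \<sigma>_def by simp
  have "0 < \<sigma>" using assms(3) unfolding \<sigma>_def .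
  have "a = t * \<sigma> + a mod \<sigma>" "a mod \<sigma> < \<sigma>"
    using \<open>0 < \<sigma>\<close> unfolding t_def by simp_all
  then have a_lt: "a < (t + 1) * \<sigma>"
    by (simp add: algebra_simps)
  have "0 \<le> k" using assms(1,2) unfolding k_def by (simp add: pos_imp_zdiv_nonneg_iff)
  then have "0 \<le> a * k" using assms(1) by simp
  have "n = j * b + s"
    unfolding j_def s_def by simp
  then have n_eq: "n = j * k * a + j * \<sigma> + s"
    unfolding b_eq by (simp add: algebra_simps)
  have "0 \<le> s" using assms(1,2) unfolding s_def by simp
  have n_lt: "n < a + t * k * a"
    using assms(4) unfolding k_def \<sigma>_def t_def by (simp add: algebra_simps)
  show "j \<le> t"
  proof (rule ccontr)
    assume "\<not> j \<le> t"
    then have "(t + 1) * (k * a) \<le> j * (k * a)" and "(t + 1) * \<sigma> \<le> j * \<sigma>"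
      using \<open>0 \<le> k\<close> assms(1,3) unfolding \<sigma>_def by (simp_all add: mult_right_mono)
    with n_eq n_lt a_lt \<open>0 \<le> s\<close> \<open>0 \<le> a * k\<close> show False
      by (simp add: algebra_simps)
  qed
  show "j * \<sigma> + s < a" if "j = t"
    using n_eq n_lt that by (simp add: algebra_simps)
qed

lemma mod_eq_or_mod_diff_ge:
  fixes a b n :: int
  assumes "0 < a" "a < b" "0 < b mod a" "0 \<le> n"
    and "n < a * (1 + (b div a) * (a div (b mod a)))"
  shows "n mod a = n mod b \<or> b mod a \<le> \<bar>n mod a - n mod b\<bar>"
proof -
  define \<sigma> j s where "\<sigma> = b mod a" and "j = n div b" and "s = n mod b"
  define l where "l = (j * \<sigma> + s) div a"
  have "0 \<le> j" "0 \<le> s" "0 < \<sigma>"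
    using assms unfolding \<sigma>_def j_def s_def by (simp_all add: pos_imp_zdiv_nonneg_iff)
  have "n mod a = (j * \<sigma> + s) mod a"
    unfolding \<sigma>_def j_def s_def by (rule mod_eq_mod_of_div_mod)
  then have diff: "n mod a - n mod b = j * \<sigma> - l * a"
    unfolding l_def s_def[symmetric] by (simp add: minus_div_mult_eq_mod [symmetric])
  have "0 \<le> l"
    unfolding l_def using \<open>0 \<le> j\<close> \<open>0 \<le> s\<close> \<open>0 < \<sigma>\<close> assms(1) by (simp add: pos_imp_zdiv_nonneg_iff)
  then consider "l = 0" | "0 < l" by linarith
  then show ?thesis
  proof cases
    case 1
    show ?thesis
    proof (cases "j = 0")
      case True
      with 1 diff show ?thesis by simp
    next
      case False
      then have "\<sigma> \<le> j * \<sigma>"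
        using \<open>0 \<le> j\<close> \<open>0 < \<sigma>\<close> mult_right_mono[of 1 j \<sigma>] by simp
      with 1 diff \<open>0 < \<sigma>\<close> show ?thesis
        unfolding \<sigma>_def by simp
    qed
  next
    case 2
    have "l * a \<le> j * \<sigma> + s"
      unfolding l_def using minus_mod_eq_div_mult[of "j * \<sigma> + s" a] pos_mod_sign[of a "j * \<sigma> + s"] assms(1)
      by linarith
    moreover have "a \<le> l * a" using 2 assms(1) by simp
    ultimately have "j \<noteq> a div \<sigma>"
      using div_le_of_less_bound(2)[OF assms(1,2,3,5)] unfolding \<sigma>_def j_def s_def by linarith
    then have "j + 1 \<le> a div \<sigma>"
      using div_le_of_less_bound(1)[OF assms(1,2,3,5)] unfolding \<sigma>_def j_def by linarith
    then have "(j + 1) * \<sigma> \<le> a div \<sigma> * \<sigma>"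
      using \<open>0 < \<sigma>\<close> by (simp add: mult_right_mono)
    also have "\<dots> \<le> a"
      using minus_mod_eq_div_mult[of a \<sigma>] pos_mod_sign[of \<sigma> a] \<open>0 < \<sigma>\<close> by linarith
    finally have "n mod a - n mod b \<le> - \<sigma>"
      using diff \<open>a \<le> l * a\<close> by (simp add: algebra_simps)
    then show ?thesis
      unfolding \<sigma>_def by arith
  qed
qed

lemma sign_of_int_from_perturbation:
  fixes d \<sigma> :: int and x :: real
  assumes "d = 0 \<or> \<sigma> \<le> \<bar>d\<bar>"
    and "- of_int \<sigma> / 2 \<le> x - of_int d" "x - of_int d < of_int \<sigma> / 2"
  shows "(of_int \<sigma> / 2 \<le> x \<longrightarrow> 0 < d)
       \<and> (x < - of_int \<sigma> / 2 \<longrightarrow> d < 0)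
       \<and> (- of_int \<sigma> / 2 \<le> x \<and> x < of_int \<sigma> / 2 \<longrightarrow> d = 0)"
proof -
  have "d = 0 \<or> \<sigma> \<le> d \<or> d \<le> - \<sigma>"
    using assms(1) by arith
  then have "d = 0 \<or> real_of_int \<sigma> \<le> of_int d \<or> of_int d \<le> - real_of_int \<sigma>"
    by (metis of_int_le_iff of_int_minus)
  with assms(2,3) have "(of_int \<sigma> / 2 \<le> x \<longrightarrow> 0 < real_of_int d)
       \<and> (x < - of_int \<sigma> / 2 \<longrightarrow> real_of_int d < 0)
       \<and> (- of_int \<sigma> / 2 \<le> x \<and> x < of_int \<sigma> / 2 \<longrightarrow> real_of_int d = 0)"
    by auto
  then show ?thesis
    by simp
qed

theorem lemma2:
  fixes m \<Gamma>1 \<Gamma>2 N rt1 rt2 :: int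
  assumes "m \<ge> 1"
    and "coprime \<Gamma>1 \<Gamma>2"
    and "1 < \<Gamma>1" and "\<Gamma>1 < \<Gamma>2"
    and "\<Gamma>2 mod \<Gamma>1 \<ge> 2"
    and "0 \<le> N"
    and "N < (m * \<Gamma>1) * (1 + ((m * \<Gamma>2) div (m * \<Gamma>1)) * ((m * \<Gamma>1) div ((m * \<Gamma>2) mod (m * \<Gamma>1))))"
    and "0 \<le> rt1" and "rt1 < m * \<Gamma>1"
    and "0 \<le> rt2" and "rt2 < m * \<Gamma>2"
    and "- (real_of_int (\<Gamma>2 mod \<Gamma>1)) / 2 \<le> real_of_int ((rt1 - N mod (m * \<Gamma>1)) - (rt2 - N mod (m * \<Gamma>2))) / real_of_int m"
    and "real_of_int ((rt1 - N mod (m * \<Gamma>1)) - (rt2 - N mod (m * \<Gamma>2))) / real_of_int m < real_of_int (\<Gamma>2 mod \<Gamma>1) / 2"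
  shows "(real_of_int (rt1 - rt2) / real_of_int m \<ge> real_of_int (\<Gamma>2 mod \<Gamma>1) / 2 \<longrightarrow> N mod (m * \<Gamma>1) > N mod (m * \<Gamma>2))
       \<and> (real_of_int (rt1 - rt2) / real_of_int m < - real_of_int (\<Gamma>2 mod \<Gamma>1) / 2 \<longrightarrow> N mod (m * \<Gamma>1) < N mod (m * \<Gamma>2))
       \<and> (- real_of_int (\<Gamma>2 mod \<Gamma>1) / 2 \<le> real_of_int (rt1 - rt2) / real_of_int m \<and> real_of_int (rt1 - rt2) / real_of_int m < real_of_int (\<Gamma>2 mod \<Gamma>1) / 2 \<longrightarrow> N mod (m * \<Gamma>1) = N mod (m * \<Gamma>2))"
proof -
  define n where "n = N div m"
  define d where "d = n mod \<Gamma>1 - n mod \<Gamma>2"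
  have "0 < m" using assms(1) by simp
  have residues: "N mod (m * \<Gamma>1) - N mod (m * \<Gamma>2) = m * d"
    unfolding d_def n_def using assms(3,4) by (intro mod_mult_diff_eq) simp_all
  have "N < m * (\<Gamma>1 * (1 + (\<Gamma>2 div \<Gamma>1) * (\<Gamma>1 div (\<Gamma>2 mod \<Gamma>1))))"
    using assms(7) \<open>0 < m\<close> by (simp add: mod_mult_mult1 mult.assoc)
  then have "n < \<Gamma>1 * (1 + (\<Gamma>2 div \<Gamma>1) * (\<Gamma>1 div (\<Gamma>2 mod \<Gamma>1)))"
    unfolding n_def by (rule div_less_of_less_mult_int[OF \<open>0 < m\<close>])
  then have gap: "d = 0 \<or> \<Gamma>2 mod \<Gamma>1 \<le> \<bar>d\<bar>"
    using mod_eq_or_mod_diff_ge[of \<Gamma>1 \<Gamma>2 n] assms(3-6) \<open>0 < m\<close>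
    unfolding d_def n_def by (simp add: pos_imp_zdiv_nonneg_iff)
  define q where "q = real_of_int (rt1 - rt2) / real_of_int m"
  have error: "q - real_of_int d
      = real_of_int ((rt1 - N mod (m * \<Gamma>1)) - (rt2 - N mod (m * \<Gamma>2))) / real_of_int m"
    unfolding q_def using residues \<open>0 < m\<close> by (simp add: field_simps)
  have "(real_of_int (\<Gamma>2 mod \<Gamma>1) / 2 \<le> q \<longrightarrow> 0 < d)
      \<and> (q < - real_of_int (\<Gamma>2 mod \<Gamma>1) / 2 \<longrightarrow> d < 0)
      \<and> (- real_of_int (\<Gamma>2 mod \<Gamma>1) / 2 \<le> q \<and> q < real_of_int (\<Gamma>2 mod \<Gamma>1) / 2 \<longrightarrow> d = 0)"
    using assms(12,13) unfolding error[symmetric] by (rule sign_of_int_from_perturbation[OF gap])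
  moreover have "0 < m * d \<longleftrightarrow> 0 < d" and "m * d < 0 \<longleftrightarrow> d < 0"
    using \<open>0 < m\<close> by (simp_all add: zero_less_mult_iff mult_less_0_iff)
  ultimately show ?thesis
    unfolding q_def[symmetric] using residues by auto
qed

end
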